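(* Let $X$ be a real Hilbert space and let $G$ be a closed convex subset of $X$. Suppose there exist $\epsilon,K>0$ such that $\epsilon B_X\subset G\subset K B_X$. If $u,w\in\partial G$ and $\cos(u,w)=\theta>0$, then $$\|u-w\|^2\le K^2\Bigl(\frac{K^2}{\epsilon^2}+1\Bigr)\frac{1-\theta^2}{\theta^2}.$$
   Context: $B_X$ is the closed unit ball of $X$, $\partial G$ the boundary of $G$, and for nonzero $u,w\in X$, $\cos(u,w)=\frac{\langle u,w\rangle}{\|u\|\|w\|}$. *)

theory Defs
  imports "HOL-Analysis.Analysis"
begin

end

theory Submission
  imports Defs
begin

text \<open>
  Assume \<open>\<parallel>w\<parallel> \<le> \<parallel>u\<parallel>\<close> and write \<open>u = c w + v\<close> with \<open>c = \<parallel>u\<parallel> \<theta> / \<parallel>w\<parallel>\<close> and \<open>v \<bottom> w\<close>, so that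
  \<open>\<parallel>v\<parallel> = \<parallel>u\<parallel> sin\<close> of the angle. Mixing \<open>u\<close> with the point \<open>-\<epsilon> v / \<parallel>v\<parallel>\<close> of the
  \<open>\<epsilon>\<close>-ball cancels \<open>v\<close> and yields the point \<open>\<epsilon> c / (\<epsilon> + \<parallel>v\<parallel>) \<cdot> w\<close> of \<open>G\<close>; as \<open>w\<close> lies on
  the boundary of a convex body around \<open>0\<close>, no multiple \<open>t w\<close> with \<open>t > 1\<close> is in \<open>G\<close>. Hence
  \<open>\<epsilon> c \<le> \<epsilon> + \<parallel>v\<parallel>\<close>, i.e. \<open>\<parallel>w\<parallel>\<close> cannot be much shorter than the projection \<open>\<parallel>u\<parallel> \<theta>\<close>
  when the angle is small. Splitting \<open>\<parallel>u - w\<parallel>\<^sup>2 = (\<parallel>u\<parallel> - \<parallel>w\<parallel> \<theta>)\<^sup>2 + \<parallel>w\<parallel>\<^sup>2 sin\<^sup>2\<close> and using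
  this lower bound on \<open>\<parallel>w\<parallel>\<close> in the first summand gives the estimate.
\<close>

lemma frontier_convex_scaleR_notin:
  fixes G :: "'a::real_normed_vector set"
  assumes "convex G" and "0 \<in> interior G" and "u \<in> frontier G" and "1 < t"
  shows "t *\<^sub>R u \<notin> G"
proof
  assume tu: "t *\<^sub>R u \<in> G"
  obtain \<epsilon> where "\<epsilon> > 0" and ball: "ball 0 \<epsilon> \<subseteq> G"
    using assms(2) mem_interior by blast
  define r where "r = 1 - 1/t"
  have r: "0 < r" "r < 1" using \<open>1 < t\<close> by (auto simp: r_def)
  have "ball u (r * \<epsilon>) \<subseteq> G"
  proof
    fix y assume "y \<in> ball u (r * \<epsilon>)"
    then have "norm (y - u) < r * \<epsilon>" by (simp add: dist_norm norm_minus_commute)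
    then have "norm ((1/r) *\<^sub>R (y - u)) < \<epsilon>"
      using r by (simp only: norm_scaleR) (simp add: field_simps)
    then have z: "(1/r) *\<^sub>R (y - u) \<in> G" using ball by auto
    have "y = (1/t) *\<^sub>R (t *\<^sub>R u) + r *\<^sub>R ((1/r) *\<^sub>R (y - u))"
      using r \<open>1 < t\<close> by (simp add: r_def algebra_simps)
    then show "y \<in> G"
      using convexD[OF assms(1) tu z, of "1/t" r] \<open>1 < t\<close> by (simp add: r_def)
  qed
  then have "u \<in> interior G"
    using r \<open>\<epsilon> > 0\<close> by (meson centre_in_ball interior_maximal open_ball subsetD mult_pos_pos)
  then show False using assms(3) by (simp add: frontier_def)
qed

lemma frontier_convex_coefficient_le:
  fixes G :: "'a::real_normed_vector set"
  assumes "convex G" and "\<epsilon> > 0" and "cball 0 \<epsilon> \<subseteq> G"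
    and "w \<in> frontier G" and "c *\<^sub>R w + v \<in> G"
  shows "\<epsilon> * c \<le> \<epsilon> + norm v"
proof -
  define l where "l = \<epsilon> / (\<epsilon> + norm v)"
  define z where "z = - (\<epsilon> / norm v) *\<^sub>R v"
  have pos: "\<epsilon> + norm v > 0" using \<open>\<epsilon> > 0\<close> by (simp add: add_pos_nonneg)
  then have l: "0 < l" "l \<le> 1" using \<open>\<epsilon> > 0\<close> by (auto simp: l_def)
  have "norm z \<le> \<epsilon>" using \<open>\<epsilon> > 0\<close> by (cases "v = 0") (auto simp: z_def)
  then have zG: "z \<in> G" using assms(3) by auto
  have "(1 - l) *\<^sub>R z = - (l *\<^sub>R v)"
  proof (cases "v = 0")
    case False
    have "1 - l = norm v / (\<epsilon> + norm v)" using pos by (simp add: l_def field_simps)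
    then show ?thesis using False by (simp add: z_def l_def)
  qed (simp add: z_def)
  then have "(l * c) *\<^sub>R w = l *\<^sub>R (c *\<^sub>R w + v) + (1 - l) *\<^sub>R z"
    by (simp add: algebra_simps)
  also have "\<dots> \<in> G" using convexD[OF assms(1,5) zG, of l "1 - l"] l by simp
  moreover have "0 \<in> interior G"
    unfolding mem_interior using assms(2,3) ball_subset_cball by blast
  ultimately have "l * c \<le> 1"
    using frontier_convex_scaleR_notin[OF assms(1) _ assms(4), of "l * c"] by fastforce
  then show ?thesis using pos by (simp add: l_def field_simps)
qed

lemma norm_diff_projection_sq:
  fixes u w :: "'a::real_inner"
  assumes "w \<noteq> 0"
  shows "(norm (u - (inner u w / (norm w)\<^sup>2) *\<^sub>R w))\<^sup>2
    = (norm u)\<^sup>2 - (inner u w)\<^sup>2 / (norm w)\<^sup>2"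
proof -
  have "(norm (u - (inner u w / (norm w)\<^sup>2) *\<^sub>R w))\<^sup>2
      = (norm u)\<^sup>2 - 2 * (inner u w / (norm w)\<^sup>2) * inner u w
        + (inner u w / (norm w)\<^sup>2)\<^sup>2 * (norm w)\<^sup>2"
    unfolding power2_norm_eq_inner
    by (simp add: inner_diff_left inner_diff_right inner_commute power2_eq_square algebra_simps)
  also have "\<dots> = (norm u)\<^sup>2 - (inner u w)\<^sup>2 / (norm w)\<^sup>2"
    using assms by (simp add: field_simps power2_eq_square)
  finally show ?thesis .
qed

lemma projection_gap_le:
  fixes \<epsilon> K a b \<theta> s :: real
  assumes "0 < \<epsilon>" "\<epsilon> \<le> K" "0 \<le> a" "a \<le> K" "0 < \<theta>" "\<theta> \<le> 1"
    and "0 \<le> s" "s\<^sup>2 = 1 - \<theta>\<^sup>2" and coeff: "\<epsilon> * a * \<theta> \<le> b * (\<epsilon> + a * s)"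
  shows "a - b * \<theta> \<le> K\<^sup>2 * s / (\<epsilon> * \<theta>)"
proof -
  have D: "\<epsilon> + a * s > 0" using assms by (simp add: add_pos_nonneg)
  have "a * \<theta>\<^sup>2 * \<epsilon> = \<theta> * (\<epsilon> * a * \<theta>)" by (simp add: power2_eq_square)
  also have "\<dots> \<le> \<theta> * (b * (\<epsilon> + a * s))" using coeff \<open>0 < \<theta>\<close> by simp
  finally have "a - b * \<theta> \<le> a - a * \<theta>\<^sup>2 * \<epsilon> / (\<epsilon> + a * s)"
    using D by (simp add: field_simps)
  also have "\<dots> = a * s * (\<epsilon> * s + a) / (\<epsilon> + a * s)"
  proof -
    have \<theta>2: "\<theta>\<^sup>2 = 1 - s\<^sup>2" using \<open>s\<^sup>2 = 1 - \<theta>\<^sup>2\<close> by simp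
    show ?thesis unfolding \<theta>2 using D by (simp add: field_simps power2_eq_square)
  qed
  also have "\<dots> \<le> K\<^sup>2 * s / (\<epsilon> * \<theta>)"
  proof -
    have "a * (\<epsilon> * s + a) * (\<epsilon> * \<theta>) \<le> a * (\<epsilon> * s + a) * \<epsilon>"
      using assms by (intro mult_left_mono) auto
    also have "\<dots> = (a * \<epsilon>) * \<epsilon> * s + (a * a) * \<epsilon>" by (simp add: algebra_simps)
    also have "\<dots> \<le> (a * K) * K * s + (K * K) * \<epsilon>"
      using assms by (intro add_mono mult_right_mono mult_mono) auto
    also have "\<dots> = K\<^sup>2 * (\<epsilon> + a * s)" by (simp add: power2_eq_square algebra_simps)
    finally have "a * (\<epsilon> * s + a) * (\<epsilon> * \<theta>) * s \<le> K\<^sup>2 * (\<epsilon> + a * s) * s"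
      using \<open>0 \<le> s\<close> by (rule mult_right_mono)
    then show ?thesis using D assms by (simp add: field_simps)
  qed
  finally show ?thesis .
qed

lemma chord_sq_le:
  fixes \<epsilon> K a b \<theta> s :: real
  assumes "0 < \<epsilon>" "\<epsilon> \<le> K" "0 \<le> b" "b \<le> a" "a \<le> K" "0 < \<theta>" "\<theta> \<le> 1"
    and "0 \<le> s" "s\<^sup>2 = 1 - \<theta>\<^sup>2" and "\<epsilon> * a * \<theta> \<le> b * (\<epsilon> + a * s)"
  shows "a\<^sup>2 + b\<^sup>2 - 2 * a * b * \<theta> \<le> K\<^sup>2 * (K\<^sup>2 / \<epsilon>\<^sup>2 + 1) * ((1 - \<theta>\<^sup>2) / \<theta>\<^sup>2)"
proof -
  have "a\<^sup>2 + b\<^sup>2 - 2 * a * b * \<theta> = (a - b * \<theta>)\<^sup>2 + b\<^sup>2 * s\<^sup>2"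
    unfolding \<open>s\<^sup>2 = 1 - \<theta>\<^sup>2\<close> by (simp add: power2_eq_square algebra_simps)
  also have "\<dots> \<le> (K\<^sup>2 * s / (\<epsilon> * \<theta>))\<^sup>2 + K\<^sup>2 * s\<^sup>2 / \<theta>\<^sup>2"
  proof (rule add_mono)
    have "b * \<theta> \<le> a" using assms mult_mono[of b a \<theta> 1] by simp
    then show "(a - b * \<theta>)\<^sup>2 \<le> (K\<^sup>2 * s / (\<epsilon> * \<theta>))\<^sup>2"
      using projection_gap_le[of \<epsilon> K a \<theta> s b] assms by (intro power_mono) auto
    have "b\<^sup>2 \<le> K\<^sup>2" using assms by (intro power_mono) auto
    also have "\<dots> \<le> K\<^sup>2 / \<theta>\<^sup>2" using assms by (simp add: field_simps power_le_one)
    finally have "b\<^sup>2 \<le> K\<^sup>2 / \<theta>\<^sup>2" .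
    then show "b\<^sup>2 * s\<^sup>2 \<le> K\<^sup>2 * s\<^sup>2 / \<theta>\<^sup>2"
      using mult_right_mono[of "b\<^sup>2" "K\<^sup>2 / \<theta>\<^sup>2" "s\<^sup>2"] by simp
  qed
  also have "\<dots> = K\<^sup>2 * (K\<^sup>2 / \<epsilon>\<^sup>2 + 1) * ((1 - \<theta>\<^sup>2) / \<theta>\<^sup>2)"
    unfolding \<open>s\<^sup>2 = 1 - \<theta>\<^sup>2\<close>[symmetric] using assms(1,6)
    by (simp add: field_simps power2_eq_square)
  finally show ?thesis .
qed

lemma frontier_convex_chord_sq_le:
  fixes G :: "'a::real_inner set"
  assumes G: "convex G" "cball 0 \<epsilon> \<subseteq> G" "G \<subseteq> cball 0 K" and "\<epsilon> > 0"
    and "u \<in> G" and "w \<in> frontier G" and "u \<noteq> 0" and "w \<noteq> 0"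
    and cos: "inner u w / (norm u * norm w) = \<theta>" and "\<theta> > 0"
    and le: "norm w \<le> norm u"
  shows "(norm (u - w))\<^sup>2 \<le> K\<^sup>2 * (K\<^sup>2 / \<epsilon>\<^sup>2 + 1) * ((1 - \<theta>\<^sup>2) / \<theta>\<^sup>2)"
proof -
  define a b where "a = norm u" and "b = norm w"
  have "0 < b" using \<open>w \<noteq> 0\<close> by (simp add: b_def)
  have inner_uw: "inner u w = a * b * \<theta>"
    using cos \<open>u \<noteq> 0\<close> \<open>w \<noteq> 0\<close> by (simp add: a_def b_def field_simps)
  have "a * b * \<theta> \<le> a * b" using norm_cauchy_schwarz[of u w] by (simp add: inner_uw a_def b_def)
  moreover have "0 < a * b" using \<open>u \<noteq> 0\<close> \<open>w \<noteq> 0\<close> by (simp add: a_def b_def)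
  ultimately have "\<theta> \<le> 1" using mult_le_cancel_left_pos[of "a * b" \<theta> 1] by simp
  have "a \<le> K" using \<open>u \<in> G\<close> G by (auto simp: a_def)
  have "\<epsilon> \<le> K"
  proof -
    have norm_eq: "norm ((\<epsilon> / a) *\<^sub>R u) = \<epsilon>"
      using \<open>\<epsilon> > 0\<close> \<open>u \<noteq> 0\<close> by (simp add: a_def)
    then have "(\<epsilon> / a) *\<^sub>R u \<in> G" using G(2) by auto
    then show ?thesis using G(3) norm_eq by auto
  qed
  define s where "s = sqrt (1 - \<theta>\<^sup>2)"
  have s: "0 \<le> s" "s\<^sup>2 = 1 - \<theta>\<^sup>2"
    using \<open>\<theta> \<le> 1\<close> \<open>\<theta> > 0\<close> by (auto simp: s_def power_le_one)
  define c where "c = inner u w / (norm w)\<^sup>2"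
  have "(norm (u - c *\<^sub>R w))\<^sup>2 = a\<^sup>2 - (a * b * \<theta>)\<^sup>2 / b\<^sup>2"
    unfolding c_def using norm_diff_projection_sq[OF \<open>w \<noteq> 0\<close>, of u] inner_uw
    by (simp add: a_def b_def)
  also have "\<dots> = a\<^sup>2 * (1 - \<theta>\<^sup>2)" using \<open>0 < b\<close> by (simp add: field_simps power2_eq_square)
  also have "\<dots> = (a * s)\<^sup>2" by (simp add: s(2) power_mult_distrib)
  finally have "norm (u - c *\<^sub>R w) = a * s" using s(1) by (simp add: a_def power2_eq_iff_nonneg)
  moreover have "c *\<^sub>R w + (u - c *\<^sub>R w) \<in> G" using \<open>u \<in> G\<close> by simp
  ultimately have "\<epsilon> * c \<le> \<epsilon> + a * s"
    using frontier_convex_coefficient_le[OF G(1) \<open>\<epsilon> > 0\<close> G(2) \<open>w \<in> frontier G\<close>] by metis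
  then have "\<epsilon> * a * \<theta> \<le> b * (\<epsilon> + a * s)"
    using \<open>0 < b\<close> by (simp add: c_def inner_uw b_def[symmetric] field_simps power2_eq_square)
  moreover have "(norm (u - w))\<^sup>2 = a\<^sup>2 + b\<^sup>2 - 2 * a * b * \<theta>"
    by (simp add: a_def b_def power2_norm_eq_inner inner_diff_left inner_diff_right
        inner_commute inner_uw algebra_simps)
  ultimately show ?thesis
    using chord_sq_le[OF \<open>\<epsilon> > 0\<close> \<open>\<epsilon> \<le> K\<close> _ _ \<open>a \<le> K\<close> \<open>\<theta> > 0\<close> \<open>\<theta> \<le> 1\<close> s]
      \<open>0 < b\<close> le by (simp add: a_def b_def)
qed

theorem lemma4p4:
  fixes G :: "'a::{real_inner, complete_space} set"
    and \<epsilon> K \<theta> :: real and u w :: 'a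
  assumes "closed G" and "convex G"
    and "\<epsilon> > 0" and "K > 0"
    and "cball 0 \<epsilon> \<subseteq> G" and "G \<subseteq> cball 0 K"
    and "u \<in> frontier G" and "w \<in> frontier G"
    and "u \<noteq> 0" and "w \<noteq> 0"
    and "inner u w / (norm u * norm w) = \<theta>" and "\<theta> > 0"
  shows "(norm (u - w))\<^sup>2 \<le> K\<^sup>2 * (K\<^sup>2 / \<epsilon>\<^sup>2 + 1) * ((1 - \<theta>\<^sup>2) / \<theta>\<^sup>2)"
proof -
  have "u \<in> G" "w \<in> G" using assms(1,7,8) frontier_subset_closed by blast+
  show ?thesis
  proof (cases "norm w \<le> norm u")
    case True
    then show ?thesis
      by (rule frontier_convex_chord_sq_le[OF assms(2,5,6,3) \<open>u \<in> G\<close> assms(8-12)])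
  next
    case False
    have "inner w u / (norm w * norm u) = \<theta>"
      using assms(11) by (simp add: inner_commute mult.commute)
    with False frontier_convex_chord_sq_le[OF assms(2,5,6,3) \<open>w \<in> G\<close> assms(7,10,9) _ assms(12)]
    show ?thesis by (simp add: norm_minus_commute)
  qed
qed

end
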